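(* Let $A:\mathbb{R}^n\rightrightarrows\mathbb{R}^n$ be maximally monotone, let $x^*$ satisfy $0\in A(x^* )$, and let $\tilde A=I-J_A$ with $J_A=(I+A)^{-1}$; assume $\tilde A$ is differentiable. Let $X:[0,\infty)\to\mathbb{R}^n$ be continuous with $X(0)=x_0$, twice continuously differentiable on $(0,\infty)$, and a solution of $$\ddot X+\frac{2}{t}\dot X+\frac{2}{t}\tilde A(X)+2\nabla\tilde A(X)\dot X=0,\qquad t>0,$$ in the integrated form $t\dot X(t)+X(t)+2t\tilde A(X(t))=x_0$ for all $t>0$. Then for every $t>0$, $$\|\tilde A(X(t))\|^2\leqslant\frac{\|x_0-x^*\|^2}{t^2+2t},\qquad \langle\tilde A(X(t)),X(t)-x^*\rangle\leqslant\frac{\|x_0-x^*\|^2}{2t}.$$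
   Context: $J_A$ is the resolvent of $A$ and $\tilde A=I-J_A$ its Yosida approximation; $\nabla\tilde A$ denotes the Jacobian of $\tilde A$. The paper states that, with $X(0)=x_0$, the second-order ODE is equivalent to the first-order equation $t\dot X+X+2t\tilde A(X)=x_0$. *)

theory Defs
  imports "HOL-Analysis.Analysis"
begin

definition monotone_op :: "('a::real_inner \<Rightarrow> 'a set) \<Rightarrow> bool" where
  "monotone_op A \<longleftrightarrow> (\<forall>x y u v. u \<in> A x \<longrightarrow> v \<in> A y \<longrightarrow> 0 \<le> inner (x - y) (u - v))"

definition maximal_monotone :: "('a::real_inner \<Rightarrow> 'a set) \<Rightarrow> bool" where
  "maximal_monotone A \<longleftrightarrow> monotone_op A \<and>
     (\<forall>B. monotone_op B \<and> (\<forall>x. A x \<subseteq> B x) \<longrightarrow> B = A)"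

text \<open>Resolvent J_A = (I + A)^{-1}: J_A x is the (unique, for maximal monotone A)
  y with x \<in> y + A y.\<close>
definition resolvent :: "('a::real_vector \<Rightarrow> 'a set) \<Rightarrow> 'a \<Rightarrow> 'a" where
  "resolvent A x = (THE y. x - y \<in> A y)"

definition yosida :: "('a::real_vector \<Rightarrow> 'a set) \<Rightarrow> 'a \<Rightarrow> 'a" where
  "yosida A x = x - resolvent A x"

end

theory Submission
  imports Defs
begin

text \<open>By Minty's theorem, which follows from Brouwer's fixed point theorem through the
  Debrunner-Flor extension lemma, the resolvent of a maximally monotone operator is defined
  everywhere, so the Yosida approximation is firmly nonexpansive; in particular it is monotone,
  its Jacobian is positive semidefinite, and it vanishes at the zero x* of A.
  Along the trajectory, the integrated equation turns the derivative of the energy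
  E(t) = t^2 |v|^2 + t <v, X - x0>, with v the Yosida approximation at X(t), into
  -t^2 <DA(X) X', X'> <= 0. As E(t) tends to 0 when t tends to 0, we get t |v|^2 + <v, X - x0> <= 0,
  and together with |v|^2 <= <v, X - x*> and the Cauchy-Schwarz inequality this yields both
  bounds.\<close>

lemma monotone_convex_combination_nonneg:
  fixes a b :: "'i \<Rightarrow> 'a::real_inner"
  assumes "finite I"
    and mono: "\<And>i j. i \<in> I \<Longrightarrow> j \<in> I \<Longrightarrow> 0 \<le> inner (a i - a j) (b i - b j)"
    and l_nonneg: "\<And>i. i \<in> I \<Longrightarrow> 0 \<le> l i" and l_sum: "sum l I = 1"
    and y_eq: "y = (\<Sum>i\<in>I. l i *\<^sub>R a i)"
  shows "0 \<le> (\<Sum>i\<in>I. l i * inner (y - a i) (x - y - b i))"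
proof -
  define M where "M = (\<Sum>i\<in>I. \<Sum>j\<in>I. l i * l j * inner (a i - a j) (b i))"
  have centred: "(\<Sum>i\<in>I. l i *\<^sub>R (y - a i)) = 0"
    using l_sum y_eq by (simp add: scaleR_diff_right sum_subtractf scaleR_sum_left[symmetric])
  have a_diff: "a i - y = (\<Sum>j\<in>I. l j *\<^sub>R (a i - a j))" for i
    using l_sum y_eq by (simp add: scaleR_diff_right sum_subtractf scaleR_sum_left[symmetric])
  have "(\<Sum>i\<in>I. l i * inner (y - a i) (x - y - b i))
      = inner (\<Sum>i\<in>I. l i *\<^sub>R (y - a i)) (x - y) + (\<Sum>i\<in>I. l i * inner (a i - y) (b i))"
    by (simp add: inner_sum_left sum.distrib[symmetric] inner_diff_right inner_diff_left algebra_simps)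
  also have "\<dots> = M"
    unfolding centred M_def by (subst a_diff) (simp add: inner_sum_left sum_distrib_left mult.assoc)
  finally have sum_eq_M: "(\<Sum>i\<in>I. l i * inner (y - a i) (x - y - b i)) = M" .
  \<comment> \<open>Symmetrising the double sum exhibits it as a combination of the monotonicity inequalities.\<close>
  have "2 * M = M + (\<Sum>i\<in>I. \<Sum>j\<in>I. l i * l j * inner (a j - a i) (b j))"
    unfolding M_def by (subst (2) sum.swap) (simp add: mult.commute)
  also have "\<dots> = (\<Sum>i\<in>I. \<Sum>j\<in>I. l i * l j * inner (a i - a j) (b i - b j))"
    unfolding M_def sum.distrib[symmetric]
    by (intro sum.cong refl) (simp add: inner_diff_right inner_diff_left algebra_simps)
  also have "\<dots> \<ge> 0"
    using mono l_nonneg by (intro sum_nonneg) simp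
  finally show ?thesis
    using sum_eq_M by simp
qed

lemma monotone_finite_extension:
  fixes a b :: "'i \<Rightarrow> 'a::euclidean_space"
  assumes fin: "finite I"
    and mono: "\<And>i j. i \<in> I \<Longrightarrow> j \<in> I \<Longrightarrow> 0 \<le> inner (a i - a j) (b i - b j)"
  shows "\<exists>y. \<forall>i\<in>I. 0 \<le> inner (y - a i) (x - y - b i)"
proof (rule ccontr)
  define g where "g i y = inner (y - a i) (x - y - b i)" for i y
  assume "\<not> ?thesis"
  then have violated: "\<exists>i\<in>I. g i y < 0" for y
    unfolding g_def by (meson not_le)
  \<comment> \<open>Average the points a i with weights measuring how badly y violates each inequality;
    a fixed point of this averaging map contradicts the monotonicity of the data.\<close>
  define w where "w i y = max 0 (- g i y)" for i y
  define W where "W y = (\<Sum>i\<in>I. w i y)" for y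
  define f where "f y = (\<Sum>i\<in>I. (w i y / W y) *\<^sub>R a i)" for y
  define K where "K = convex hull (a ` I)"
  have w_nonneg: "0 \<le> w i y" for i y
    by (simp add: w_def)
  have W_pos: "0 < W y" for y
  proof -
    obtain i where "i \<in> I" "g i y < 0"
      using violated by blast
    then show ?thesis
      unfolding W_def by (intro sum_pos2[OF fin, of i]) (auto simp: w_def)
  qed
  have weights_sum: "(\<Sum>i\<in>I. w i y / W y) = 1" for y
    using W_pos[of y] by (simp add: W_def flip: sum_divide_distrib)
  have "continuous_on K f"
    using W_pos unfolding f_def W_def w_def g_def
    by (intro continuous_intros) (auto simp: less_imp_neq[symmetric])
  moreover have "f \<in> K \<rightarrow> K"
    unfolding f_def K_def
    by (intro Pi_I convex_sum[OF fin convex_convex_hull weights_sum])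
       (auto intro: hull_inc divide_nonneg_pos W_pos w_nonneg)
  moreover have "compact K" "convex K" "K \<noteq> {}"
    using violated fin by (auto simp: K_def finite_imp_compact_convex_hull)
  ultimately obtain y where "f y = y"
    using brouwer by metis
  then have "0 \<le> (\<Sum>i\<in>I. w i y / W y * g i y)"
    unfolding g_def f_def
    by (intro monotone_convex_combination_nonneg[OF fin mono])
       (auto intro: divide_nonneg_pos W_pos w_nonneg weights_sum)
  also have "(\<Sum>i\<in>I. w i y / W y * g i y) = - (\<Sum>i\<in>I. (w i y)\<^sup>2) / W y"
  proof -
    have "w i y * g i y = - (w i y)\<^sup>2" for i
      by (simp add: w_def max_def power2_eq_square)
    then show ?thesis
      by (simp add: sum_divide_distrib sum_negf)
  qed
  also have "\<dots> < 0"
  proof -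
    obtain i where "i \<in> I" "g i y < 0"
      using violated by blast
    then have "0 < (\<Sum>i\<in>I. (w i y)\<^sup>2)"
      by (intro sum_pos2[OF fin, of i]) (auto simp: w_def)
    then show ?thesis
      using W_pos[of y] by simp
  qed
  finally show False
    by simp
qed

lemma maximal_monotone_memI:
  assumes max_mono: "maximal_monotone A"
    and compatible: "\<And>a b. b \<in> A a \<Longrightarrow> 0 \<le> inner (y - a) (u - b)"
  shows "u \<in> A y"
proof -
  define B where "B = A(y := insert u (A y))"
  have mono: "monotone_op A"
    using max_mono by (simp add: maximal_monotone_def)
  have "monotone_op B"
    unfolding monotone_op_def
  proof (intro allI impI)
    fix x1 x2 v1 v2
    assume "v1 \<in> B x1" "v2 \<in> B x2"
    then consider "v1 \<in> A x1" "v2 \<in> A x2" | "x1 = y" "v1 = u" "v2 \<in> A x2"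
      | "v1 \<in> A x1" "x2 = y" "v2 = u" | "x1 = y" "v1 = u" "x2 = y" "v2 = u"
      unfolding B_def by (auto split: if_splits)
    then show "0 \<le> inner (x1 - x2) (v1 - v2)"
    proof cases
      case 1
      then show ?thesis
        using mono unfolding monotone_op_def by blast
    next
      case 2
      then show ?thesis
        using compatible by simp
    next
      case 3
      then have "inner (x1 - x2) (v1 - v2) = inner (y - x1) (u - v1)"
        by (metis inner_minus_left inner_minus_right minus_diff_eq)
      then show ?thesis
        using compatible 3 by simp
    qed simp
  qed
  moreover have "\<forall>x. A x \<subseteq> B x"
    by (auto simp: B_def)
  ultimately have "B = A"
    using max_mono by (simp add: maximal_monotone_def)
  then show ?thesis
    by (metis B_def fun_upd_same insertI1)
qed

lemma inner_nonneg_set_eq_cball: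
  fixes a b :: "'a::real_inner"
  shows "{y. 0 \<le> inner (y - a) (b - y)} = cball (midpoint a b) (dist a b / 2)"
proof -
  have "inner (y - a) (b - y) = (dist a b / 2)\<^sup>2 - (dist (midpoint a b) y)\<^sup>2" for y
    by (simp add: midpoint_def dist_norm power2_norm_eq_inner power_divide inner_diff inner_add
        inner_commute algebra_simps add_divide_distrib diff_divide_distrib)
  then show ?thesis
    by (auto simp: power2_le_iff_abs_le)
qed

theorem minty_surjectivity:
  fixes A :: "'a::euclidean_space \<Rightarrow> 'a set"
  assumes max_mono: "maximal_monotone A"
  shows "\<exists>y. x - y \<in> A y"
proof -
  define G where "G = {p. snd p \<in> A (fst p)}"
  define C where "C p = {y. 0 \<le> inner (y - fst p) (x - y - snd p)}" for p :: "'a \<times> 'a"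
  have "\<Inter> (C ` G) \<noteq> {}"
  proof (rule compact_fip_Heine_Borel)
    have "C p = {y. 0 \<le> inner (y - fst p) ((x - snd p) - y)}" for p
      unfolding C_def by (simp add: algebra_simps)
    then show "compact T" if "T \<in> C ` G" for T
      using that by (auto simp: inner_nonneg_set_eq_cball)
  next
    fix \<F> assume "finite \<F>" "\<F> \<subseteq> C ` G"
    then obtain S where S: "S \<subseteq> G" "finite S" "\<F> = C ` S"
      by (meson finite_subset_image)
    have "0 \<le> inner (fst p - fst q) (snd p - snd q)" if "p \<in> S" "q \<in> S" for p q
      using that S(1) max_mono unfolding G_def maximal_monotone_def monotone_op_def by blast
    then obtain y where "\<forall>p\<in>S. 0 \<le> inner (y - fst p) (x - y - snd p)"
      using monotone_finite_extension[OF S(2)] by blast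
    then have "y \<in> \<Inter> \<F>"
      using S(3) by (auto simp: C_def)
    then show "\<Inter> \<F> \<noteq> {}"
      by blast
  qed
  then obtain y where "\<And>p. p \<in> G \<Longrightarrow> y \<in> C p"
    by blast
  then have "x - y \<in> A y"
    by (intro maximal_monotone_memI[OF max_mono]) (force simp: G_def C_def)
  then show ?thesis ..
qed

lemma resolvent_eqI:
  assumes "monotone_op A" and "x - y \<in> A y"
  shows "resolvent A x = y"
  unfolding resolvent_def
proof (rule the_equality)
  fix z assume "x - z \<in> A z"
  then have "0 \<le> inner (z - y) ((x - z) - (x - y))"
    using assms unfolding monotone_op_def by blast
  then have "(norm (z - y))\<^sup>2 \<le> 0"
    by (simp add: power2_norm_eq_inner inner_diff_right algebra_simps)
  then show "z = y"
    by simp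
qed (rule assms(2))

lemma resolvent_mem:
  fixes A :: "'a::euclidean_space \<Rightarrow> 'a set"
  assumes "maximal_monotone A"
  shows "x - resolvent A x \<in> A (resolvent A x)"
proof -
  obtain y where "x - y \<in> A y"
    using minty_surjectivity[OF assms] by blast
  moreover have "monotone_op A"
    using assms by (simp add: maximal_monotone_def)
  ultimately show ?thesis
    by (simp add: resolvent_eqI)
qed

lemma yosida_eq_0I:
  assumes "monotone_op A" and "0 \<in> A x"
  shows "yosida A x = 0"
  using resolvent_eqI[of A x x] assms by (simp add: yosida_def)

lemma yosida_firmly_nonexpansive:
  fixes A :: "'a::euclidean_space \<Rightarrow> 'a set"
  assumes "maximal_monotone A"
  shows "(norm (yosida A x - yosida A y))\<^sup>2 \<le> inner (x - y) (yosida A x - yosida A y)"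
proof -
  have "0 \<le> inner ((x - yosida A x) - (y - yosida A y)) (yosida A x - yosida A y)"
    using assms resolvent_mem[OF assms, of x] resolvent_mem[OF assms, of y]
    unfolding maximal_monotone_def monotone_op_def yosida_def by auto
  then show ?thesis
    by (simp add: power2_norm_eq_inner inner_diff_left)
qed

lemma has_derivative_monotone_nonneg:
  fixes f :: "'a::real_inner \<Rightarrow> 'a"
  assumes f_deriv: "(f has_derivative f') (at x)"
    and mono: "\<And>y. 0 \<le> inner (f y - f x) (y - x)"
  shows "0 \<le> inner (f' h) h"
proof (rule ccontr)
  assume neg: "\<not> ?thesis"
  define \<phi> where "\<phi> s = inner (f (x + s *\<^sub>R h)) h" for s
  have line_deriv: "((\<lambda>s. x + s *\<^sub>R h) has_vector_derivative h) (at 0)"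
    by (auto intro!: derivative_eq_intros)
  have "(f has_derivative f') (at ((\<lambda>s. x + s *\<^sub>R h) 0) within range (\<lambda>s. x + s *\<^sub>R h))"
    using f_deriv by (simp add: has_derivative_at_withinI)
  from vector_derivative_diff_chain_within[OF line_deriv this]
  have "((\<lambda>s. f (x + s *\<^sub>R h)) has_vector_derivative f' h) (at 0)"
    by (simp add: o_def)
  then have "(\<phi> has_real_derivative inner (f' h) h) (at 0)"
    unfolding \<phi>_def has_real_derivative_iff_has_vector_derivative
    by (rule bounded_linear.has_vector_derivative[OF bounded_linear_inner_left])
  then obtain d where "0 < d" and decreasing: "\<And>s. 0 < s \<Longrightarrow> s < d \<Longrightarrow> \<phi> s < \<phi> 0"
    using DERIV_neg_dec_right neg by (metis add_0 not_le)
  have "0 \<le> (d/2) * inner (f (x + (d/2) *\<^sub>R h) - f x) h"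
    using mono[of "x + (d/2) *\<^sub>R h"] by simp
  then have "\<phi> 0 \<le> \<phi> (d/2)"
    using \<open>0 < d\<close> by (simp add: \<phi>_def inner_diff_left zero_le_mult_iff)
  with decreasing[of "d/2"] \<open>0 < d\<close> show False
    by simp
qed

lemmas has_vector_derivative_inner = bounded_bilinear.has_vector_derivative[OF bounded_bilinear_inner]

lemma lyapunov_has_real_derivative:
  fixes V X :: "real \<Rightarrow> 'a::real_inner"
  assumes V_deriv: "(V has_vector_derivative V') (at s)"
    and X_deriv: "(X has_vector_derivative X') (at s)"
    and eq: "s *\<^sub>R X' + X s + (2 * s) *\<^sub>R V s = x0"
  shows "((\<lambda>r. r\<^sup>2 * (norm (V r))\<^sup>2 + r * inner (V r) (X r - x0))
           has_real_derivative - (s\<^sup>2 * inner V' X')) (at s)"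
proof -
  have VV_deriv: "((\<lambda>r. inner (V r) (V r)) has_real_derivative 2 * inner (V s) V') (at s)"
    using has_vector_derivative_inner[OF V_deriv V_deriv]
    by (simp add: has_real_derivative_iff_has_vector_derivative inner_commute)
  have VX_deriv: "((\<lambda>r. inner (V r) (X r - x0)) has_real_derivative
      inner (V s) X' + inner V' (X s - x0)) (at s)"
    using has_vector_derivative_inner[OF V_deriv has_vector_derivative_diff_const[THEN iffD2, OF X_deriv]]
    by (simp add: has_real_derivative_iff_has_vector_derivative)
  have "X s - x0 = - (s *\<^sub>R X') - (2 * s) *\<^sub>R V s"
    using eq by (simp add: algebra_simps)
  then have V_X: "inner (V s) (X s - x0) = - s * inner (V s) X' - 2 * s * inner (V s) (V s)"
    and V'_X: "inner V' (X s - x0) = - s * inner V' X' - 2 * s * inner (V s) V'"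
    by (simp_all add: inner_diff_right inner_commute)
  have "((\<lambda>r. r\<^sup>2 * (norm (V r))\<^sup>2 + r * inner (V r) (X r - x0)) has_real_derivative
      2 * s * inner (V s) (V s) + s\<^sup>2 * (2 * inner (V s) V')
      + (inner (V s) (X s - x0) + s * (inner (V s) X' + inner V' (X s - x0)))) (at s)"
    unfolding power2_norm_eq_inner by (rule derivative_eq_intros VV_deriv VX_deriv refl | simp)+
  moreover have "2 * s * inner (V s) (V s) + s\<^sup>2 * (2 * inner (V s) V')
      + (inner (V s) (X s - x0) + s * (inner (V s) X' + inner V' (X s - x0)))
      = - (s\<^sup>2 * inner V' X')"
    unfolding V_X V'_X by (simp add: power2_eq_square algebra_simps)
  ultimately show ?thesis
    by simp
qed

lemma monotone_flow_lyapunov_nonpos: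
  fixes Y :: "'a::real_inner \<Rightarrow> 'a" and X X' :: "real \<Rightarrow> 'a"
  assumes Y_deriv: "\<And>x. (Y has_derivative DY x) (at x)"
    and Y_mono: "\<And>x y. 0 \<le> inner (Y y - Y x) (y - x)"
    and X_lim: "(X \<longlongrightarrow> x0) (at_right 0)"
    and X_deriv: "\<And>t. 0 < t \<Longrightarrow> (X has_vector_derivative X' t) (at t)"
    and X_eq: "\<And>t. 0 < t \<Longrightarrow> t *\<^sub>R X' t + X t + (2 * t) *\<^sub>R Y (X t) = x0"
    and "0 < t"
  shows "t * (norm (Y (X t)))\<^sup>2 + inner (Y (X t)) (X t - x0) \<le> 0"
proof -
  define F where "F r = r\<^sup>2 * (norm (Y (X r)))\<^sup>2 + r * inner (Y (X r)) (X r - x0)" for r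
  have F_deriv: "(F has_real_derivative - (r\<^sup>2 * inner (DY (X r) (X' r)) (X' r))) (at r)"
    if "0 < r" for r
  proof -
    have "(Y has_derivative DY (X r)) (at (X r) within range X)"
      using Y_deriv by (rule has_derivative_at_withinI)
    from vector_derivative_diff_chain_within[OF X_deriv[OF that] this]
    have YX_deriv: "((\<lambda>r. Y (X r)) has_vector_derivative DY (X r) (X' r)) (at r)"
      by (simp add: o_def)
    show ?thesis
      unfolding F_def by (rule lyapunov_has_real_derivative[OF YX_deriv X_deriv[OF that] X_eq[OF that]])
  qed
  have F_antitone: "F t \<le> F r" if "0 < r" "r \<le> t" for r
  proof (rule DERIV_nonpos_imp_nonincreasing[OF \<open>r \<le> t\<close>])
    fix s assume "r \<le> s" "s \<le> t"
    then have "0 < s"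
      using \<open>0 < r\<close> by simp
    have "0 \<le> s\<^sup>2 * inner (DY (X s) (X' s)) (X' s)"
      using has_derivative_monotone_nonneg[OF Y_deriv Y_mono] by simp
    then show "\<exists>D. (F has_real_derivative D) (at s) \<and> D \<le> 0"
      using F_deriv[OF \<open>0 < s\<close>] neg_le_0_iff_le by blast
  qed
  have F_lim: "(F \<longlongrightarrow> 0) (at_right 0)"
  proof -
    have "((\<lambda>r. Y (X r)) \<longlongrightarrow> Y x0) (at_right 0)"
      using isCont_tendsto_compose[OF has_derivative_continuous[OF Y_deriv] X_lim] .
    then have "(F \<longlongrightarrow> 0\<^sup>2 * (norm (Y x0))\<^sup>2 + 0 * inner (Y x0) (x0 - x0)) (at_right 0)"
      unfolding F_def by (intro tendsto_intros X_lim)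
    then show ?thesis
      by simp
  qed
  have F_eventually: "\<forall>\<^sub>F r in at_right 0. F t \<le> F r"
    using eventually_at_right_real[OF \<open>0 < t\<close>] by eventually_elim (simp add: F_antitone)
  have "F t \<le> 0"
    using tendsto_lowerbound[OF F_lim F_eventually] by simp
  moreover have "F t = t * (t * (norm (Y (X t)))\<^sup>2 + inner (Y (X t)) (X t - x0))"
    by (simp add: F_def power2_eq_square algebra_simps)
  ultimately show ?thesis
    using \<open>0 < t\<close> by (simp add: mult_le_0_iff)
qed

lemma quadratic_rate_bounds:
  fixes t n w p :: real
  assumes "0 < t" and "n\<^sup>2 \<le> p" and "t * n\<^sup>2 + p \<le> n * w"
  shows "n\<^sup>2 \<le> w\<^sup>2 / (t\<^sup>2 + 2 * t)" and "p \<le> w\<^sup>2 / (2 * t)"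
proof -
  have "(t + 1) * n\<^sup>2 \<le> n * w"
    using assms by (simp add: algebra_simps)
  then have "(t + 1) * ((t + 1) * n\<^sup>2) \<le> (t + 1) * (n * w)"
    using \<open>0 < t\<close> by (intro mult_left_mono) simp_all
  then have "((t + 1) * n)\<^sup>2 \<le> (t + 1) * n * w"
    by (simp add: power2_eq_square algebra_simps)
  moreover have "2 * ((t + 1) * n) * w \<le> ((t + 1) * n)\<^sup>2 + w\<^sup>2"
    by (rule sum_squares_bound)
  ultimately have "((t + 1) * n)\<^sup>2 \<le> w\<^sup>2"
    by linarith
  moreover have "((t + 1) * n)\<^sup>2 = n\<^sup>2 * (t\<^sup>2 + 2 * t) + n\<^sup>2"
    by (simp add: power2_eq_square algebra_simps)
  ultimately have "n\<^sup>2 * (t\<^sup>2 + 2 * t) \<le> w\<^sup>2"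
    using zero_le_power2[of n] by linarith
  moreover have "0 < t\<^sup>2 + 2 * t"
    using \<open>0 < t\<close> by (simp add: add_pos_pos)
  ultimately show "n\<^sup>2 \<le> w\<^sup>2 / (t\<^sup>2 + 2 * t)"
    by (simp add: pos_le_divide_eq)
  have "2 * t * p \<le> 2 * t * (n * w - t * n\<^sup>2)"
    using assms by simp
  also have "\<dots> = w\<^sup>2 - ((w - t * n)\<^sup>2 + (t * n)\<^sup>2)"
    by (simp add: power2_eq_square algebra_simps)
  also have "\<dots> \<le> w\<^sup>2"
    by simp
  finally show "p \<le> w\<^sup>2 / (2 * t)"
    using \<open>0 < t\<close> by (simp add: pos_le_divide_eq mult.commute)
qed

theorem theorem9:
  fixes A :: "'a::euclidean_space \<Rightarrow> 'a set"
    and xs x0 :: 'a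
    and X X' X'' :: "real \<Rightarrow> 'a"
    and DA :: "'a \<Rightarrow> 'a \<Rightarrow> 'a"
  assumes maxmono: "maximal_monotone A"
    and zero: "0 \<in> A xs"
    and diff: "\<And>x. (yosida A has_derivative DA x) (at x)"
    and cont: "continuous_on {0..} X"
    and init: "X 0 = x0"
    and d1: "\<And>t. t > 0 \<Longrightarrow> (X has_vector_derivative X' t) (at t)"
    and d2: "\<And>t. t > 0 \<Longrightarrow> (X' has_vector_derivative X'' t) (at t)"
    and cont2: "continuous_on {0<..} X''"
    and ode: "\<And>t. t > 0 \<Longrightarrow>
       X'' t + (2 / t) *\<^sub>R X' t + (2 / t) *\<^sub>R yosida A (X t) + 2 *\<^sub>R DA (X t) (X' t) = 0"
    and integrated: "\<And>t. t > 0 \<Longrightarrow>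
       t *\<^sub>R X' t + X t + (2 * t) *\<^sub>R yosida A (X t) = x0"
    and tpos: "t > 0"
  shows "(norm (yosida A (X t)))\<^sup>2 \<le> (norm (x0 - xs))\<^sup>2 / (t\<^sup>2 + 2 * t)
       \<and> inner (yosida A (X t)) (X t - xs) \<le> (norm (x0 - xs))\<^sup>2 / (2 * t)"
proof -
  \<comment> \<open>The second-order equation enters only through its integrated form.\<close>
  let ?v = "yosida A (X t)"
  note firm = yosida_firmly_nonexpansive[OF maxmono]
  have "0 \<le> inner (yosida A y - yosida A x) (y - x)" for x y
    using firm[of y x] zero_le_power2 inner_commute by (metis order_trans)
  moreover have "(X \<longlongrightarrow> x0) (at_right 0)"
    using cont init by (auto simp: continuous_on_def intro: tendsto_within_subset)
  ultimately have lyapunov: "t * (norm ?v)\<^sup>2 + inner ?v (X t - x0) \<le> 0"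
    using monotone_flow_lyapunov_nonpos[OF diff _ _ d1 integrated tpos] by blast
  have "yosida A xs = 0"
    using maxmono zero by (simp add: maximal_monotone_def yosida_eq_0I)
  then have "(norm ?v)\<^sup>2 \<le> inner ?v (X t - xs)"
    using firm[of "X t" xs] by (simp add: inner_commute)
  moreover have "t * (norm ?v)\<^sup>2 + inner ?v (X t - xs) \<le> norm ?v * norm (x0 - xs)"
    using lyapunov norm_cauchy_schwarz[of ?v "x0 - xs"] by (simp add: inner_diff_right)
  ultimately show ?thesis
    using quadratic_rate_bounds[OF tpos] by blast
qed

end
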